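(* Let $\rho=\frac12(I+x\sigma_1+y\sigma_2+z\sigma_3)$ with $r:=\sqrt{x^2+y^2+z^2}\in(0,1)$, let $A\in M_2(\mathbb C)$ be self-adjoint and $f\in\mathcal F^{\,r}_{op}$. Then $$I^{SLD}_\rho(A)=\frac{r^2}{1-m_{\tilde f}(1-r,1+r)}\,I^f_\rho(A).$$
   Context: $\sigma_1,\sigma_2,\sigma_3$ are the Pauli matrices. $\mathcal F_{op}$ is the class of functions $f:(0,\infty)\to(0,\infty)$ that are operator monotone, satisfy $f(1)=1$ and $tf(t^{-1})=f(t)$ for all $t>0$. $f(0):=\lim_{x\to0^+}f(x)$, and $\mathcal F^{\,r}_{op}=\{f\in\mathcal F_{op}: f(0)\neq0\}$. For $f\in\mathcal F^{\,r}_{op}$, $\tilde f(x):=\frac12\big[(x+1)-(x-1)^2\frac{f(0)}{f(x)}\big]$ for $x>0$. For $g\in\mathcal F_{op}$ and $x,y>0$, $m_g(x,y)=xg(y/x)$. $L_\rho(X)=\rho X$, $R_\rho(X)=X\rho$, and $m_f(L_\rho,R_\rho)$ multiplies the entry $X_{ij}$ of $X$ (in an orthonormal eigenbasis of $\rho$ with eigenvalues $\lambda_i$) by $m_f(\lambda_i,\lambda_j)$. $\|X\|^2_{\rho,f}=\mathrm{Tr}\big(X^* m_f(L_\rho,R_\rho)^{-1}(X)\big)$. The $f$-information is $I^f_\rho(A)=\frac{f(0)}{2}\|i[\rho,A]\|^2_{\rho,f}$, and $I^{SLD}_\rho:=I^{f_{SLD}}_\rho$ with $f_{SLD}(x)=\frac{1+x}{2}$.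 *)

theory Defs
  imports "Jordan_Normal_Form.Schur_Decomposition"
begin

definition hermitian_mat :: "complex mat \<Rightarrow> bool" where
  "hermitian_mat A \<longleftrightarrow> A \<in> carrier_mat (dim_row A) (dim_row A) \<and> mat_adjoint A = A"

definition unitary_mat :: "nat \<Rightarrow> complex mat \<Rightarrow> bool" where
  "unitary_mat n U \<longleftrightarrow> U \<in> carrier_mat n n \<and> U * mat_adjoint U = 1\<^sub>m n \<and> mat_adjoint U * U = 1\<^sub>m n"

definition psd_mat :: "complex mat \<Rightarrow> bool" where
  "psd_mat A \<longleftrightarrow> hermitian_mat A \<and>
     (\<forall>v \<in> carrier_vec (dim_row A). 0 \<le> Re ((A *\<^sub>v v) \<bullet>c v))"

definition diag_real :: "real list \<Rightarrow> complex mat" where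
  "diag_real d = mat (length d) (length d) (\<lambda>(i,j). if i = j then complex_of_real (d ! i) else 0)"

definition spectral_decomp :: "nat \<Rightarrow> complex mat \<Rightarrow> complex mat \<Rightarrow> real list \<Rightarrow> bool" where
  "spectral_decomp n A U d \<longleftrightarrow> unitary_mat n U \<and> length d = n \<and> A = U * diag_real d * mat_adjoint U"

text \<open>\<open>FA = f(A)\<close> for a positive definite \<open>A\<close> (functional calculus via a spectral decomposition).\<close>
definition mat_fun_rel :: "(real \<Rightarrow> real) \<Rightarrow> complex mat \<Rightarrow> complex mat \<Rightarrow> bool" where
  "mat_fun_rel f A FA \<longleftrightarrow> (\<exists>n U d. A \<in> carrier_mat n n \<and> spectral_decomp n A U d \<and>
      (\<forall>x \<in> set d. x > 0) \<and> FA = U * diag_real (map f d) * mat_adjoint U)"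

definition operator_monotone :: "(real \<Rightarrow> real) \<Rightarrow> bool" where
  "operator_monotone f \<longleftrightarrow> (\<forall>n A B FA FB. A \<in> carrier_mat n n \<longrightarrow> B \<in> carrier_mat n n \<longrightarrow>
      psd_mat (B - A) \<longrightarrow> mat_fun_rel f A FA \<longrightarrow> mat_fun_rel f B FB \<longrightarrow> psd_mat (FB - FA))"

definition F_op :: "(real \<Rightarrow> real) \<Rightarrow> bool" where
  "F_op f \<longleftrightarrow> (\<forall>x>0. f x > 0) \<and> operator_monotone f \<and> f 1 = 1 \<and> (\<forall>t>0. t * f (1 / t) = f t)"

definition f_zero :: "(real \<Rightarrow> real) \<Rightarrow> real" where
  "f_zero f = Lim (at_right 0) f"

definition F_op_r :: "(real \<Rightarrow> real) \<Rightarrow> bool" where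
  "F_op_r f \<longleftrightarrow> F_op f \<and> f_zero f \<noteq> 0"

definition f_tilde :: "(real \<Rightarrow> real) \<Rightarrow> real \<Rightarrow> real" where
  "f_tilde f x = ((x + 1) - (x - 1)^2 * f_zero f / f x) / 2"

definition m_mean :: "(real \<Rightarrow> real) \<Rightarrow> real \<Rightarrow> real \<Rightarrow> real" where
  "m_mean g x y = x * g (y / x)"

definition f_SLD :: "real \<Rightarrow> real" where
  "f_SLD x = (1 + x) / 2"

definition mtrace :: "complex mat \<Rightarrow> complex" where
  "mtrace A = (\<Sum>i<dim_row A. A $$ (i,i))"

text \<open>\<open>m_f(L_\<rho>,R_\<rho>)^{-1}(X)\<close> computed in an orthonormal eigenbasis of \<open>\<rho>\<close>.
  The eigenbasis is chosen via SOME; the result does not depend on the choice.\<close>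
definition mf_inv :: "(real \<Rightarrow> real) \<Rightarrow> complex mat \<Rightarrow> complex mat \<Rightarrow> complex mat" where
  "mf_inv f \<rho> X = (let n = dim_row \<rho>;
      (U, d) = (SOME (U, d). spectral_decomp n \<rho> U d);
      Y = mat_adjoint U * X * U;
      Z = mat n n (\<lambda>(i,j). Y $$ (i,j) / complex_of_real (m_mean f (d ! i) (d ! j)))
    in U * Z * mat_adjoint U)"

definition normsq_f :: "(real \<Rightarrow> real) \<Rightarrow> complex mat \<Rightarrow> complex mat \<Rightarrow> complex" where
  "normsq_f f \<rho> X = mtrace (mat_adjoint X * mf_inv f \<rho> X)"

definition f_information :: "(real \<Rightarrow> real) \<Rightarrow> complex mat \<Rightarrow> complex mat \<Rightarrow> complex" where
  "f_information f \<rho> A =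
     complex_of_real (f_zero f / 2) * normsq_f f \<rho> (\<i> \<cdot>\<^sub>m (\<rho> * A - A * \<rho>))"

definition SLD_information :: "complex mat \<Rightarrow> complex mat \<Rightarrow> complex" where
  "SLD_information \<rho> A = f_information f_SLD \<rho> A"

definition sigma1 :: "complex mat" where "sigma1 = mat_of_rows_list 2 [[0, 1], [1, 0]]"
definition sigma2 :: "complex mat" where "sigma2 = mat_of_rows_list 2 [[0, -\<i>], [\<i>, 0]]"
definition sigma3 :: "complex mat" where "sigma3 = mat_of_rows_list 2 [[1, 0], [0, -1]]"

definition qubit_state :: "real \<Rightarrow> real \<Rightarrow> real \<Rightarrow> complex mat" where
  "qubit_state x y z = (1/2 :: complex) \<cdot>\<^sub>m (1\<^sub>m 2 + complex_of_real x \<cdot>\<^sub>m sigma1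
      + complex_of_real y \<cdot>\<^sub>m sigma2 + complex_of_real z \<cdot>\<^sub>m sigma3)"

end

theory Submission
  imports Defs
begin

(* In an eigenbasis of rho, with eigenvalues d_i and B = U* A U, the commutator i[rho, A] has
   entries i (d_i - d_j) B_ij, so that
     ||i[rho, A]||^2_(rho,g) = sum_(i,j) (d_i - d_j)^2 |B_ij|^2 / m_g(d_i, d_j).
   The diagonal terms vanish. A qubit state with Bloch radius r has eigenvalues (1 - r)/2 and
   (1 + r)/2, and the symmetry t g(1/t) = g(t) makes both off-diagonal weights equal to
   m_g((1 - r)/2, (1 + r)/2). So each of these norms is the Hilbert-Schmidt norm of the
   commutator divided by that mean, which is 1/2 for f_SLD; the two informations therefore differ
   by the factor m_f((1 - r)/2, (1 + r)/2) / f(0), and an elementary computation identifies it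
   with r^2 / (1 - m_(f~)(1 - r, 1 + r)). Only positivity and symmetry of f enter, not operator
   monotonicity, and A need not be self-adjoint. *)

section \<open>Adjoints, diagonal matrices and traces\<close>

lemma mat_adjoint_carrier_mat:
  "(A :: complex mat) \<in> carrier_mat n m \<Longrightarrow> mat_adjoint A \<in> carrier_mat m n"
  unfolding mat_adjoint_def by auto

lemma dim_mat_adjoint [simp]:
  "dim_row (mat_adjoint (A :: complex mat)) = dim_col A" "dim_col (mat_adjoint A) = dim_row A"
  unfolding mat_adjoint_def by auto

lemma index_mat_adjoint [simp]:
  "i < dim_col A \<Longrightarrow> j < dim_row A \<Longrightarrow> mat_adjoint (A :: complex mat) $$ (i, j) = cnj (A $$ (j, i))"
  unfolding mat_adjoint_def by (auto simp: mat_of_rows_def)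

lemma mat_adjoint_mat_adjoint [simp]: "mat_adjoint (mat_adjoint (A :: complex mat)) = A"
  by (rule eq_matI) auto

lemma mat_adjoint_mult:
  "(A :: complex mat) \<in> carrier_mat n m \<Longrightarrow> B \<in> carrier_mat m k \<Longrightarrow>
    mat_adjoint (A * B) = mat_adjoint B * mat_adjoint A"
  by (rule eq_matI) (auto simp: scalar_prod_def cnj_sum intro!: sum.cong)

lemma unitary_matD:
  assumes "unitary_mat n U"
  shows "U \<in> carrier_mat n n" "mat_adjoint U \<in> carrier_mat n n"
    "U * mat_adjoint U = 1\<^sub>m n" "mat_adjoint U * U = 1\<^sub>m n"
  using assms mat_adjoint_carrier_mat[of U] unfolding unitary_mat_def by auto

lemma dim_diag_real [simp]: "dim_row (diag_real d) = length d" "dim_col (diag_real d) = length d"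
  unfolding diag_real_def by auto

lemma index_diag_real [simp]:
  "i < length d \<Longrightarrow> j < length d \<Longrightarrow> diag_real d $$ (i, j) = (if i = j then complex_of_real (d ! i) else 0)"
  unfolding diag_real_def by simp

lemma diag_real_carrier [simp]: "diag_real d \<in> carrier_mat (length d) (length d)"
  unfolding diag_real_def by auto

lemma index_diag_real_mult:
  assumes "B \<in> carrier_mat n m" "length d = n" "i < n" "j < m"
  shows "(diag_real d * B) $$ (i, j) = complex_of_real (d ! i) * B $$ (i, j)"
  using assms by (simp add: diag_real_def scalar_prod_def if_distrib if_distribR sum.delta cong: if_cong)

lemma index_mult_diag_real:
  assumes "B \<in> carrier_mat m n" "length d = n" "i < m" "j < n"
  shows "(B * diag_real d) $$ (i, j) = B $$ (i, j) * complex_of_real (d ! j)"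
  using assms by (simp add: diag_real_def scalar_prod_def if_distrib if_distribR sum.delta cong: if_cong)

lemma mtrace_mult_comm:
  "(A :: complex mat) \<in> carrier_mat n m \<Longrightarrow> B \<in> carrier_mat m n \<Longrightarrow> mtrace (A * B) = mtrace (B * A)"
  unfolding mtrace_def
  by (simp add: scalar_prod_def, subst sum.swap) (auto simp: lessThan_atLeast0 mult.commute intro!: sum.cong)

lemma mtrace_unitary_conj:
  assumes U: "unitary_mat n U" and M: "M \<in> carrier_mat n n"
  shows "mtrace (U * M * mat_adjoint U) = mtrace M"
proof -
  note U' = unitary_matD[OF U]
  have "mtrace (U * M * mat_adjoint U) = mtrace (mat_adjoint U * (U * M))"
    using U' M by (intro mtrace_mult_comm[of _ n n]) auto
  also have "mat_adjoint U * (U * M) = M"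
    using U' M by (simp add: assoc_mult_mat[symmetric, of _ n n _ n _ n])
  finally show ?thesis .
qed

lemma mtrace_adjoint_unitary_conj:
  assumes U: "unitary_mat n U" and X: "X \<in> carrier_mat n n" and Z: "Z \<in> carrier_mat n n"
  shows "mtrace (mat_adjoint X * (U * Z * mat_adjoint U)) =
    mtrace (mat_adjoint (mat_adjoint U * X * U) * Z)"
proof -
  note U' = unitary_matD[OF U]
  define Y where "Y = mat_adjoint U * X * U"
  have Y: "Y \<in> carrier_mat n n"
    unfolding Y_def using U'(1,2) X by auto
  then have Y': "mat_adjoint Y \<in> carrier_mat n n"
    by (rule mat_adjoint_carrier_mat)
  have "U * Y * mat_adjoint U = (U * mat_adjoint U) * X * (U * mat_adjoint U)"
    unfolding Y_def using U'(1,2) X by (simp add: assoc_mult_mat[of _ n n _ n _ n])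
  then have "X = U * Y * mat_adjoint U"
    using U'(3) X by simp
  then have "mat_adjoint X = U * mat_adjoint Y * mat_adjoint U"
    using U'(1,2) Y by (simp add: mat_adjoint_mult[of _ n n _ n] assoc_mult_mat[of _ n n _ n _ n])
  then have "mat_adjoint X * (U * Z * mat_adjoint U) =
      U * mat_adjoint Y * (mat_adjoint U * U) * Z * mat_adjoint U"
    using U'(1,2) Y' Z by (simp add: assoc_mult_mat[of _ n n _ n _ n])
  also have "\<dots> = U * (mat_adjoint Y * Z) * mat_adjoint U"
    using U'(1,2,4) Y' Z by (simp add: assoc_mult_mat[of _ n n _ n _ n])
  also have "mtrace \<dots> = mtrace (mat_adjoint Y * Z)"
    using U Y' Z by (intro mtrace_unitary_conj) auto
  finally show ?thesis unfolding Y_def .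
qed

lemma unitary_conj_commutator:
  assumes U: "unitary_mat n U" and D: "D \<in> carrier_mat n n" and A: "A \<in> carrier_mat n n"
  defines "\<rho> \<equiv> U * D * mat_adjoint U" and "B \<equiv> mat_adjoint U * A * U"
  shows "mat_adjoint U * (\<rho> * A - A * \<rho>) * U = D * B - B * D"
proof -
  note U' = unitary_matD[OF U]
  have \<rho>: "\<rho> \<in> carrier_mat n n" and B: "B \<in> carrier_mat n n"
    unfolding \<rho>_def B_def using U'(1,2) D A by auto
  have "mat_adjoint U * (\<rho> * A) * U = (mat_adjoint U * U) * D * B"
    unfolding \<rho>_def B_def using U'(1,2) D A by (simp add: assoc_mult_mat[of _ n n _ n _ n])
  then have left: "mat_adjoint U * (\<rho> * A) * U = D * B"
    using U'(4) D by simp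
  have "mat_adjoint U * (A * \<rho>) * U = B * D * (mat_adjoint U * U)"
    unfolding \<rho>_def B_def using U'(1,2) D A by (simp add: assoc_mult_mat[of _ n n _ n _ n])
  then have right: "mat_adjoint U * (A * \<rho>) * U = B * D"
    using U'(4) B D by simp
  have \<rho>A: "\<rho> * A \<in> carrier_mat n n" "A * \<rho> \<in> carrier_mat n n"
    using \<rho> A by auto
  have "mat_adjoint U * (\<rho> * A - A * \<rho>) * U =
      (mat_adjoint U * (\<rho> * A) - mat_adjoint U * (A * \<rho>)) * U"
    by (simp only: mult_minus_distrib_mat[OF U'(2) \<rho>A])
  also have "\<dots> = mat_adjoint U * (\<rho> * A) * U - mat_adjoint U * (A * \<rho>) * U"
    using mult_carrier_mat[OF U'(2) \<rho>A(1)] mult_carrier_mat[OF U'(2) \<rho>A(2)]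
    by (rule minus_mult_distrib_mat[OF _ _ U'(1)])
  finally have "mat_adjoint U * (\<rho> * A - A * \<rho>) * U =
      mat_adjoint U * (\<rho> * A) * U - mat_adjoint U * (A * \<rho>) * U" .
  then show ?thesis
    unfolding left right .
qed

lemma mtrace_adjoint_mult_weighted:
  assumes "Y \<in> carrier_mat n n"
  shows "mtrace (mat_adjoint Y * mat n n (\<lambda>(i, j). Y $$ (i, j) / complex_of_real (w i j))) =
    complex_of_real (\<Sum>i<n. \<Sum>j<n. (cmod (Y $$ (i, j)))\<^sup>2 / w i j)"
proof -
  have "mtrace (mat_adjoint Y * mat n n (\<lambda>(i, j). Y $$ (i, j) / complex_of_real (w i j))) =
      (\<Sum>j<n. \<Sum>i<n. cnj (Y $$ (i, j)) * (Y $$ (i, j) / complex_of_real (w i j)))"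
    unfolding mtrace_def using assms by (simp add: scalar_prod_def atLeast0LessThan)
  also have "\<dots> = (\<Sum>j<n. \<Sum>i<n. complex_of_real ((cmod (Y $$ (i, j)))\<^sup>2 / w i j))"
  proof -
    have "cnj z * (z / complex_of_real c) = complex_of_real ((cmod z)\<^sup>2 / c)" for z c
      by (simp only: of_real_divide complex_norm_square times_divide_eq_right mult.commute)
    then show ?thesis
      by (simp only:)
  qed
  also have "\<dots> = (\<Sum>i<n. \<Sum>j<n. complex_of_real ((cmod (Y $$ (i, j)))\<^sup>2 / w i j))"
    by (rule sum.swap)
  finally show ?thesis
    by (simp only: of_real_sum)
qed

lemma index_diag_real_commutator:
  assumes "B \<in> carrier_mat n n" "length d = n" "i < n" "j < n"
  shows "(diag_real d * B - B * diag_real d) $$ (i, j) = complex_of_real (d ! i - d ! j) * B $$ (i, j)"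
proof -
  have "(diag_real d * B - B * diag_real d) $$ (i, j) = (diag_real d * B) $$ (i, j) - (B * diag_real d) $$ (i, j)"
    using assms by (intro index_minus_mat) auto
  also have "\<dots> = complex_of_real (d ! i) * B $$ (i, j) - B $$ (i, j) * complex_of_real (d ! j)"
    by (simp only: index_diag_real_mult[OF assms] index_mult_diag_real[OF assms])
  finally show ?thesis
    by (simp add: algebra_simps)
qed

section \<open>The metric-adjusted norm of a commutator\<close>

(* The left-hand side is normsq_f after unfolding mf_inv, with an arbitrary weight w in place of
   the mean m_g(d_i, d_j). *)
lemma mtrace_commutator_weighted:
  assumes sd: "spectral_decomp n \<rho> U d" and A: "A \<in> carrier_mat n n"
  defines "X \<equiv> \<i> \<cdot>\<^sub>m (\<rho> * A - A * \<rho>)" and "B \<equiv> mat_adjoint U * A * U"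
  shows "mtrace (mat_adjoint X * (U * mat n n (\<lambda>(i, j).
      (mat_adjoint U * X * U) $$ (i, j) / complex_of_real (w i j)) * mat_adjoint U)) =
    complex_of_real (\<Sum>i<n. \<Sum>j<n. (d ! i - d ! j)\<^sup>2 * (cmod (B $$ (i, j)))\<^sup>2 / w i j)"
proof -
  have U: "unitary_mat n U" and d: "length d = n" and \<rho>: "\<rho> = U * diag_real d * mat_adjoint U"
    using sd unfolding spectral_decomp_def by auto
  note U' = unitary_matD[OF U]
  have D: "diag_real d \<in> carrier_mat n n"
    using d by auto
  have "\<rho> \<in> carrier_mat n n"
    unfolding \<rho> using U'(1,2) D by (meson mult_carrier_mat)
  then have C: "\<rho> * A - A * \<rho> \<in> carrier_mat n n"
    using A by (meson minus_carrier_mat mult_carrier_mat)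
  then have X: "X \<in> carrier_mat n n"
    unfolding X_def by (rule smult_carrier_mat)
  have B: "B \<in> carrier_mat n n"
    unfolding B_def using U'(1,2) A by (meson mult_carrier_mat)
  have Y_carrier: "mat_adjoint U * X * U \<in> carrier_mat n n"
    using U'(1,2) X by (meson mult_carrier_mat)
  have "mat_adjoint U * X * U = \<i> \<cdot>\<^sub>m (mat_adjoint U * (\<rho> * A - A * \<rho>) * U)"
    unfolding X_def
    by (simp only: mult_smult_distrib[OF U'(2) C] mult_smult_assoc_mat[OF mult_carrier_mat[OF U'(2) C] U'(1)])
  also have "\<dots> = \<i> \<cdot>\<^sub>m (diag_real d * B - B * diag_real d)"
    unfolding B_def \<rho> by (simp only: unitary_conj_commutator[OF U D A])
  finally have Y: "mat_adjoint U * X * U = \<i> \<cdot>\<^sub>m (diag_real d * B - B * diag_real d)" .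
  have Y_norm: "(cmod ((mat_adjoint U * X * U) $$ (i, j)))\<^sup>2 = (d ! i - d ! j)\<^sup>2 * (cmod (B $$ (i, j)))\<^sup>2"
    if "i < n" "j < n" for i j
  proof -
    have "(mat_adjoint U * X * U) $$ (i, j) = \<i> * ((diag_real d * B - B * diag_real d) $$ (i, j))"
      unfolding Y using that B d by simp
    also have "\<dots> = \<i> * (complex_of_real (d ! i - d ! j) * B $$ (i, j))"
      by (simp only: index_diag_real_commutator[OF B d that])
    finally show ?thesis
      by (simp add: norm_mult power_mult_distrib del: of_real_diff)
  qed
  have "mtrace (mat_adjoint X * (U * mat n n (\<lambda>(i, j).
      (mat_adjoint U * X * U) $$ (i, j) / complex_of_real (w i j)) * mat_adjoint U)) =
    mtrace (mat_adjoint (mat_adjoint U * X * U) * mat n n (\<lambda>(i, j).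
      (mat_adjoint U * X * U) $$ (i, j) / complex_of_real (w i j)))"
    by (rule mtrace_adjoint_unitary_conj[OF U X mat_carrier])
  also have "\<dots> = complex_of_real (\<Sum>i<n. \<Sum>j<n. (cmod ((mat_adjoint U * X * U) $$ (i, j)))\<^sup>2 / w i j)"
    by (rule mtrace_adjoint_mult_weighted[OF Y_carrier])
  also have "\<dots> = complex_of_real (\<Sum>i<n. \<Sum>j<n. (d ! i - d ! j)\<^sup>2 * (cmod (B $$ (i, j)))\<^sup>2 / w i j)"
    by (simp add: Y_norm)
  finally show ?thesis .
qed

(* mf_inv works in the eigen-decomposition picked by SOME, so the formula is stated for that one. *)
lemma normsq_f_commutator:
  assumes chosen: "(SOME (U, d). spectral_decomp n \<rho> U d) = (U, d)"
    and sd: "spectral_decomp n \<rho> U d" and n: "dim_row \<rho> = n" and A: "A \<in> carrier_mat n n"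
  shows "normsq_f g \<rho> (\<i> \<cdot>\<^sub>m (\<rho> * A - A * \<rho>)) = complex_of_real (\<Sum>i<n. \<Sum>j<n.
    (d ! i - d ! j)\<^sup>2 * (cmod ((mat_adjoint U * A * U) $$ (i, j)))\<^sup>2 / m_mean g (d ! i) (d ! j))"
  using mtrace_commutator_weighted[OF sd A, of "\<lambda>i j. m_mean g (d ! i) (d ! j)"]
  unfolding normsq_f_def mf_inv_def Let_def n chosen by (simp only: case_prod_conv)

lemma mtrace_adjoint_commutator:
  assumes sd: "spectral_decomp n \<rho> U d" and A: "A \<in> carrier_mat n n"
  defines "X \<equiv> \<i> \<cdot>\<^sub>m (\<rho> * A - A * \<rho>)"
  shows "mtrace (mat_adjoint X * X) = complex_of_real (\<Sum>i<n. \<Sum>j<n.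
    (d ! i - d ! j)\<^sup>2 * (cmod ((mat_adjoint U * A * U) $$ (i, j)))\<^sup>2)"
proof -
  have U: "unitary_mat n U" and d: "length d = n" and \<rho>: "\<rho> = U * diag_real d * mat_adjoint U"
    using sd unfolding spectral_decomp_def by auto
  note U' = unitary_matD[OF U]
  have "\<rho> \<in> carrier_mat n n"
    unfolding \<rho> using U'(1,2) d by (meson mult_carrier_mat diag_real_carrier)
  then have X: "X \<in> carrier_mat n n"
    unfolding X_def using A by (meson minus_carrier_mat mult_carrier_mat smult_carrier_mat)
  define Y where "Y = mat_adjoint U * X * U"
  have Y_carrier: "Y \<in> carrier_mat n n"
    unfolding Y_def using U'(1,2) X by (meson mult_carrier_mat)
  have "mat n n (\<lambda>(i, j). Y $$ (i, j) / complex_of_real 1) = Y"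
    using Y_carrier by (intro eq_matI) auto
  moreover have "U * Y * mat_adjoint U = (U * mat_adjoint U) * X * (U * mat_adjoint U)"
    unfolding Y_def using U'(1,2) X by (simp add: assoc_mult_mat[of _ n n _ n _ n])
  then have "U * Y * mat_adjoint U = X"
    using U'(3) X by simp
  ultimately show ?thesis
    using mtrace_commutator_weighted[OF sd A, of "\<lambda>_ _. 1"] unfolding X_def Y_def by simp
qed

lemma normsq_f_commutator_const_mean:
  assumes chosen: "(SOME (U, d). spectral_decomp n \<rho> U d) = (U, d)"
    and sd: "spectral_decomp n \<rho> U d" and n: "dim_row \<rho> = n" and A: "A \<in> carrier_mat n n"
    and const: "\<And>i j. i < n \<Longrightarrow> j < n \<Longrightarrow> i \<noteq> j \<Longrightarrow> m_mean g (d ! i) (d ! j) = c"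
  defines "X \<equiv> \<i> \<cdot>\<^sub>m (\<rho> * A - A * \<rho>)"
  shows "normsq_f g \<rho> X = mtrace (mat_adjoint X * X) / complex_of_real c"
proof -
  define a where "a i j = (d ! i - d ! j)\<^sup>2 * (cmod ((mat_adjoint U * A * U) $$ (i, j)))\<^sup>2" for i j
  have term_eq: "a i j / m_mean g (d ! i) (d ! j) = a i j / c" if "i < n" "j < n" for i j
    using const[OF that] unfolding a_def by (cases "i = j") auto
  have "(\<Sum>i<n. \<Sum>j<n. a i j / m_mean g (d ! i) (d ! j)) = (\<Sum>i<n. \<Sum>j<n. a i j) / c"
    by (simp add: sum_divide_distrib term_eq)
  then show ?thesis
    unfolding X_def normsq_f_commutator[OF chosen sd n A] mtrace_adjoint_commutator[OF sd A]
    by (simp add: a_def)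
qed

section \<open>Qubit states\<close>

lemma sum_lessThan_2: "(\<Sum>i<2. f i) = f 0 + f (1 :: nat)"
  by (simp add: numeral_2_eq_2)

lemma mat2_eqI:
  assumes "dim_row A = 2" "dim_col A = 2" "dim_row B = 2" "dim_col B = 2"
    "A $$ (0, 0) = B $$ (0, 0)" "A $$ (0, 1) = B $$ (0, 1)" "A $$ (1, 0) = B $$ (1, 0)" "A $$ (1, 1) = B $$ (1, 1)"
  shows "A = B"
  by (rule eq_matI) (use assms in \<open>auto simp: less_2_cases_iff\<close>)

lemma index_mult_mat2:
  assumes "dim_row A = 2" "dim_col A = 2" "dim_row B = 2" "dim_col B = 2" "i < 2" "j < 2"
  shows "(A * B) $$ (i, j) = A $$ (i, 0) * B $$ (0, j) + A $$ (i, 1) * B $$ (1, j)"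
  using assms by (simp add: scalar_prod_def atLeast0LessThan sum_lessThan_2)

lemma mtrace_mat2: "A \<in> carrier_mat 2 2 \<Longrightarrow> mtrace A = A $$ (0, 0) + A $$ (1, 1)"
  unfolding mtrace_def by (simp add: sum_lessThan_2)

lemma qubit_state_carrier: "qubit_state x y z \<in> carrier_mat 2 2"
  unfolding qubit_state_def sigma1_def sigma2_def sigma3_def carrier_mat_def
  by (simp add: mat_of_rows_list_def)

lemma qubit_state_index [simp]:
  "qubit_state x y z $$ (0, 0) = Complex ((1 + z) / 2) 0"
  "qubit_state x y z $$ (0, 1) = Complex (x / 2) (- y / 2)"
  "qubit_state x y z $$ (1, 0) = Complex (x / 2) (y / 2)"
  "qubit_state x y z $$ (1, 1) = Complex ((1 - z) / 2) 0"
  unfolding qubit_state_def sigma1_def sigma2_def sigma3_def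
  by (simp_all add: mat_of_rows_list_def complex_eq_iff)

(* simp normalises the index 1 :: nat to Suc 0, so the rules are registered in that form. *)
declare qubit_state_index [unfolded One_nat_def, simp]

definition bloch_eigenbasis :: "real \<Rightarrow> real \<Rightarrow> real \<Rightarrow> complex mat" where
  "bloch_eigenbasis a b c = mat_of_rows_list 2 [[Complex a (- b), Complex (- c) 0], [Complex c 0, Complex a b]]"

lemma bloch_eigenbasis_index [simp]:
  "dim_row (bloch_eigenbasis a b c) = 2" "dim_col (bloch_eigenbasis a b c) = 2"
  "bloch_eigenbasis a b c $$ (0, 0) = Complex a (- b)"
  "bloch_eigenbasis a b c $$ (0, 1) = Complex (- c) 0"
  "bloch_eigenbasis a b c $$ (1, 0) = Complex c 0"
  "bloch_eigenbasis a b c $$ (1, 1) = Complex a b"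
  unfolding bloch_eigenbasis_def by (simp_all add: mat_of_rows_list_def)

declare bloch_eigenbasis_index [unfolded One_nat_def, simp]

lemma bloch_eigenbasis_carrier: "bloch_eigenbasis a b c \<in> carrier_mat 2 2"
  by (simp add: carrier_matI)

lemma dim_qubit_state [simp]: "dim_row (qubit_state x y z) = 2" "dim_col (qubit_state x y z) = 2"
  using qubit_state_carrier by auto

lemma bloch_eigenbasis_unitary:
  assumes "a * a + b * b + c * c = 1"
  shows "unitary_mat 2 (bloch_eigenbasis a b c)"
  unfolding unitary_mat_def
  by (intro conjI mat2_eqI bloch_eigenbasis_carrier)
    (simp_all add: index_mult_mat2 complex_eq_iff del: index_mult_mat(1), (use assms in linarith)+)

lemma qubit_state_bloch_eigenbasis:
  assumes "a * a + b * b + c * c = 1"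
  shows "qubit_state (2 * r * a * c) (2 * r * b * c) (r * (a * a + b * b - c * c)) =
    bloch_eigenbasis a b c * diag_real [(1 + r) / 2, (1 - r) / 2] * mat_adjoint (bloch_eigenbasis a b c)"
  by (rule mat2_eqI)
    (simp_all add: index_mult_mat2 complex_eq_iff del: index_mult_mat(1), safe,
      ((simp add: field_simps; fail) | use assms in algebra)+)

(* (2ac, 2bc, a^2 + b^2 - c^2) is the Hopf map of the unit vector (a + ib, c) of C^2. Away from
   the north pole z = r the preimage used is (x + iy, r - z) / sqrt (2r (r - z)). *)
lemma bloch_vector_hopf_param:
  assumes r: "r = sqrt (x\<^sup>2 + y\<^sup>2 + z\<^sup>2)" and r_pos: "0 < r"
  obtains a b c where "a * a + b * b + c * c = 1"
    and "x = 2 * r * a * c" "y = 2 * r * b * c" "z = r * (a * a + b * b - c * c)"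
proof (cases "z = r")
  case True
  have "r\<^sup>2 = x\<^sup>2 + y\<^sup>2 + z\<^sup>2"
    unfolding r by simp
  then have "x\<^sup>2 + y\<^sup>2 = 0"
    using True by simp
  then have "x = 0" "y = 0"
    by (simp_all add: sum_power2_eq_zero_iff)
  with True show ?thesis
    by (intro that[of 1 0 0]) simp_all
next
  case False
  have "z \<le> r"
    unfolding r by (rule real_le_rsqrt) simp
  with False have "z < r"
    by simp
  define N where "N = sqrt (2 * r * (r - z))"
  have NN: "N * N = 2 * r * (r - z)"
    unfolding N_def using \<open>z < r\<close> r_pos by simp
  have N_ne: "N * N \<noteq> 0"
    unfolding NN using \<open>z < r\<close> r_pos by simp
  define a b c where "a = x / N" and "b = y / N" and "c = (r - z) / N"
  have "r\<^sup>2 = x\<^sup>2 + y\<^sup>2 + z\<^sup>2"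
    unfolding r by simp
  then have xy: "x * x + y * y = (r - z) * (r + z)"
    by (simp add: power2_eq_square algebra_simps)
  have ab_sq: "2 * r * (a * a + b * b) = r + z"
  proof -
    have "2 * r * (a * a + b * b) = 2 * r * (x * x + y * y) / (N * N)"
      unfolding a_def b_def by (simp add: add_divide_distrib[symmetric] times_divide_eq_right)
    also have "\<dots> = 2 * r * (r - z) * (r + z) / (2 * r * (r - z))"
      by (simp only: xy NN mult.assoc)
    also have "\<dots> = r + z"
      using N_ne unfolding NN by simp
    finally show ?thesis .
  qed
  have c_sq: "2 * r * (c * c) = r - z"
    unfolding c_def using N_ne by (simp add: NN)
  have "2 * r * (a * a + b * b + c * c) = 2 * r * 1"
    using ab_sq c_sq by (simp add: algebra_simps)
  then have "a * a + b * b + c * c = 1"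
    using r_pos by simp
  moreover have "x = 2 * r * a * c" "y = 2 * r * b * c"
    unfolding a_def b_def c_def using N_ne by (simp_all add: NN)
  moreover have "z = r * (a * a + b * b - c * c)"
    using ab_sq c_sq by (simp add: algebra_simps)
  ultimately show ?thesis
    by (rule that)
qed

lemma qubit_state_spectral_decomp:
  assumes r: "r = sqrt (x\<^sup>2 + y\<^sup>2 + z\<^sup>2)" and r_pos: "0 < r"
  obtains U where "spectral_decomp 2 (qubit_state x y z) U [(1 + r) / 2, (1 - r) / 2]"
proof -
  obtain a b c where abc: "a * a + b * b + c * c = 1"
    and xyz: "x = 2 * r * a * c" "y = 2 * r * b * c" "z = r * (a * a + b * b - c * c)"
    using bloch_vector_hopf_param[OF r r_pos] .
  have "spectral_decomp 2 (qubit_state x y z) (bloch_eigenbasis a b c) [(1 + r) / 2, (1 - r) / 2]"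
    unfolding spectral_decomp_def xyz
    using bloch_eigenbasis_unitary[OF abc] qubit_state_bloch_eigenbasis[OF abc] by simp
  then show ?thesis
    by (rule that)
qed

lemma spectral_decomp_mtrace:
  assumes sd: "spectral_decomp n \<rho> U d"
  shows "mtrace \<rho> = complex_of_real (\<Sum>i<n. d ! i)"
    and "mtrace (\<rho> * \<rho>) = complex_of_real (\<Sum>i<n. (d ! i)\<^sup>2)"
proof -
  have U: "unitary_mat n U" and d: "length d = n" and \<rho>: "\<rho> = U * diag_real d * mat_adjoint U"
    using sd unfolding spectral_decomp_def by auto
  note U' = unitary_matD[OF U]
  have D: "diag_real d \<in> carrier_mat n n"
    using d by auto
  have "mtrace \<rho> = mtrace (diag_real d)"
    unfolding \<rho> by (rule mtrace_unitary_conj[OF U D])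
  also have "\<dots> = complex_of_real (\<Sum>i<n. d ! i)"
    unfolding mtrace_def using d by simp
  finally show "mtrace \<rho> = complex_of_real (\<Sum>i<n. d ! i)" .
  have "\<rho> * \<rho> = U * diag_real d * (mat_adjoint U * U) * diag_real d * mat_adjoint U"
    unfolding \<rho> using U'(1,2) D by (simp add: assoc_mult_mat[of _ n n _ n _ n])
  also have "\<dots> = U * (diag_real d * diag_real d) * mat_adjoint U"
    unfolding U'(4) using U'(1,2) D by (simp add: assoc_mult_mat[of _ n n _ n _ n] left_mult_one_mat[OF D])
  finally have "mtrace (\<rho> * \<rho>) = mtrace (diag_real d * diag_real d)"
    using D by (simp add: mtrace_unitary_conj[OF U])
  also have "\<dots> = complex_of_real (\<Sum>i<n. (d ! i)\<^sup>2)"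
    unfolding mtrace_def using D d by (simp add: index_diag_real_mult power2_eq_square del: index_mult_mat(1))
  finally show "mtrace (\<rho> * \<rho>) = complex_of_real (\<Sum>i<n. (d ! i)\<^sup>2)" .
qed

lemma mtrace_qubit_state: "mtrace (qubit_state x y z) = 1"
  by (simp add: mtrace_mat2[OF qubit_state_carrier] complex_eq_iff field_simps)

lemma mtrace_qubit_state_square:
  "mtrace (qubit_state x y z * qubit_state x y z) = complex_of_real ((1 + x\<^sup>2 + y\<^sup>2 + z\<^sup>2) / 2)"
  using qubit_state_carrier[of x y z]
  by (simp add: mtrace_mat2 index_mult_mat2 complex_eq_iff power2_eq_square field_simps del: index_mult_mat(1))

lemma qubit_state_eigenvalues:
  assumes sd: "spectral_decomp 2 (qubit_state x y z) U d" and r: "r = sqrt (x\<^sup>2 + y\<^sup>2 + z\<^sup>2)"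
  shows "d ! 0 = (1 - r) / 2 \<and> d ! 1 = (1 + r) / 2 \<or> d ! 0 = (1 + r) / 2 \<and> d ! 1 = (1 - r) / 2"
proof -
  have "complex_of_real (d ! 0 + d ! 1) = complex_of_real 1"
    using spectral_decomp_mtrace(1)[OF sd] by (simp add: mtrace_qubit_state sum_lessThan_2)
  then have sum: "d ! 0 + d ! 1 = 1"
    by (simp only: of_real_eq_iff)
  have "complex_of_real ((d ! 0)\<^sup>2 + (d ! 1)\<^sup>2) = complex_of_real ((1 + r\<^sup>2) / 2)"
    using spectral_decomp_mtrace(2)[OF sd] unfolding r
    by (simp add: mtrace_qubit_state_square sum_lessThan_2 add.assoc)
  then have squares: "(d ! 0)\<^sup>2 + (d ! 1)\<^sup>2 = (1 + r\<^sup>2) / 2"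
    by (simp only: of_real_eq_iff)
  have "(d ! 0 - d ! 1)\<^sup>2 = 2 * ((d ! 0)\<^sup>2 + (d ! 1)\<^sup>2) - (d ! 0 + d ! 1)\<^sup>2"
    by (simp add: power2_eq_square algebra_simps)
  then have "(d ! 0 - d ! 1)\<^sup>2 = r\<^sup>2"
    unfolding sum squares by (simp add: field_simps)
  then have "(d ! 0 - d ! 1 - r) * (d ! 0 - d ! 1 + r) = 0"
    by (simp add: power2_eq_square algebra_simps)
  then show ?thesis
    using sum by auto
qed

section \<open>Means and information of a qubit state\<close>

lemma m_mean_commute:
  assumes sym: "\<And>t. 0 < t \<Longrightarrow> t * g (1 / t) = g t" and "0 < a" "0 < b"
  shows "m_mean g a b = m_mean g b a"
proof -
  have "a / b * g (b / a) = g (a / b)"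
    using sym[of "a / b"] assms(2,3) by simp
  then show ?thesis
    unfolding m_mean_def using assms(3) by (simp add: field_simps)
qed

lemma qubit_normsq_f_commutator:
  fixes g :: "real \<Rightarrow> real"
  assumes r: "r = sqrt (x\<^sup>2 + y\<^sup>2 + z\<^sup>2)" and r_pos: "0 < r" and r_less: "r < 1"
    and A: "A \<in> carrier_mat 2 2" and sym: "\<And>t. 0 < t \<Longrightarrow> t * g (1 / t) = g t"
  defines "X \<equiv> \<i> \<cdot>\<^sub>m (qubit_state x y z * A - A * qubit_state x y z)"
  shows "normsq_f g (qubit_state x y z) X =
    mtrace (mat_adjoint X * X) / complex_of_real (m_mean g ((1 - r) / 2) ((1 + r) / 2))"
proof -
  define \<rho> where "\<rho> = qubit_state x y z"
  obtain U\<^sub>0 where "spectral_decomp 2 \<rho> U\<^sub>0 [(1 + r) / 2, (1 - r) / 2]"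
    unfolding \<rho>_def using qubit_state_spectral_decomp[OF r r_pos] .
  then have ex: "\<exists>p. case p of (U, d) \<Rightarrow> spectral_decomp 2 \<rho> U d"
    by auto
  obtain U d where chosen: "(SOME (U, d). spectral_decomp 2 \<rho> U d) = (U, d)"
    by (metis surj_pair)
  have sd: "spectral_decomp 2 \<rho> U d"
    using someI_ex[OF ex] unfolding chosen by simp
  have eig: "d ! 0 = (1 - r) / 2 \<and> d ! 1 = (1 + r) / 2 \<or> d ! 0 = (1 + r) / 2 \<and> d ! 1 = (1 - r) / 2"
    using qubit_state_eigenvalues[OF sd[unfolded \<rho>_def] r] .
  have swap: "m_mean g ((1 + r) / 2) ((1 - r) / 2) = m_mean g ((1 - r) / 2) ((1 + r) / 2)"
    using r_pos r_less by (intro m_mean_commute[OF sym]) auto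
  have "m_mean g (d ! i) (d ! j) = m_mean g ((1 - r) / 2) ((1 + r) / 2)"
    if "i < 2" "j < 2" "i \<noteq> j" for i j
  proof -
    have "i = 0 \<and> j = 1 \<or> i = 1 \<and> j = 0"
      using that by auto
    then show ?thesis
      using eig swap by (elim disjE conjE) (simp_all only:)
  qed
  moreover have "dim_row \<rho> = 2"
    unfolding \<rho>_def by simp
  ultimately show ?thesis
    unfolding X_def \<rho>_def[symmetric] using normsq_f_commutator_const_mean[OF chosen sd _ A] by blast
qed

lemma f_zero_SLD: "f_zero f_SLD = 1 / 2"
proof -
  have "(f_SLD \<longlongrightarrow> (1 + 0) / 2) (at_right 0)"
    unfolding f_SLD_def by (intro tendsto_intros) simp
  then show ?thesis
    unfolding f_zero_def by (simp add: tendsto_Lim)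
qed

lemma qubit_SLD_information:
  assumes r: "r = sqrt (x\<^sup>2 + y\<^sup>2 + z\<^sup>2)" and "0 < r" "r < 1" and "A \<in> carrier_mat 2 2"
  defines "X \<equiv> \<i> \<cdot>\<^sub>m (qubit_state x y z * A - A * qubit_state x y z)"
  shows "SLD_information (qubit_state x y z) A = mtrace (mat_adjoint X * X) / 2"
proof -
  have sym: "t * f_SLD (1 / t) = f_SLD t" if "0 < t" for t
    unfolding f_SLD_def using that by (simp add: field_simps)
  have mean: "m_mean f_SLD ((1 - r) / 2) ((1 + r) / 2) = 1 / 2"
    unfolding m_mean_def f_SLD_def using \<open>r < 1\<close> by (simp add: field_simps)
  show ?thesis
    using qubit_normsq_f_commutator[OF assms(1-4) sym, folded X_def, unfolded mean]
    unfolding SLD_information_def f_information_def f_zero_SLD X_def[symmetric] by simp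
qed

lemma m_mean_scale: "c \<noteq> 0 \<Longrightarrow> m_mean g a b = c * m_mean g (a / c) (b / c)"
  unfolding m_mean_def by simp

lemma m_mean_f_tilde:
  assumes "a \<noteq> 0"
  shows "m_mean (f_tilde f) a b = (a + b) / 2 - (b - a)\<^sup>2 * f_zero f / (2 * m_mean f a b)"
proof (cases "f (b / a) = 0")
  case True
  then show ?thesis
    unfolding m_mean_def f_tilde_def using assms by (simp add: field_simps)
next
  case False
  then show ?thesis
    unfolding m_mean_def f_tilde_def using assms by (simp add: field_simps power2_eq_square)
qed

lemma one_minus_m_mean_f_tilde:
  assumes "r \<noteq> 1"
  shows "1 - m_mean (f_tilde f) (1 - r) (1 + r) = r\<^sup>2 * f_zero f / m_mean f ((1 - r) / 2) ((1 + r) / 2)"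
proof -
  have "m_mean f (1 - r) (1 + r) = 2 * m_mean f ((1 - r) / 2) ((1 + r) / 2)"
    by (rule m_mean_scale) simp
  then show ?thesis
    using m_mean_f_tilde[of "1 - r" f "1 + r"] assms by (simp add: field_simps power2_eq_square)
qed

theorem mainTheorem9:
  fixes x y z :: real and A :: "complex mat" and f :: "real \<Rightarrow> real"
  defines "r \<equiv> sqrt (x^2 + y^2 + z^2)"
  assumes "0 < r" and "r < 1"
    and "A \<in> carrier_mat 2 2" and "mat_adjoint A = A"
    and "F_op_r f"
  shows "SLD_information (qubit_state x y z) A =
    complex_of_real (r^2 / (1 - m_mean (f_tilde f) (1 - r) (1 + r)))
      * f_information f (qubit_state x y z) A"
proof -
  have f_pos: "\<And>t. 0 < t \<Longrightarrow> 0 < f t" and f_sym: "\<And>t. 0 < t \<Longrightarrow> t * f (1 / t) = f t"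
    and f0: "f_zero f \<noteq> 0"
    using assms(6) unfolding F_op_r_def F_op_def by auto
  have r: "r = sqrt (x\<^sup>2 + y\<^sup>2 + z\<^sup>2)"
    unfolding r_def ..
  define X where "X = \<i> \<cdot>\<^sub>m (qubit_state x y z * A - A * qubit_state x y z)"
  define K where "K = m_mean f ((1 - r) / 2) ((1 + r) / 2)"
  have K_pos: "0 < K"
    unfolding K_def m_mean_def using assms(2,3) f_pos by simp
  have SLD: "SLD_information (qubit_state x y z) A = mtrace (mat_adjoint X * X) / 2"
    unfolding X_def using qubit_SLD_information[OF r assms(2-4)] .
  have F: "f_information f (qubit_state x y z) A =
      complex_of_real (f_zero f / 2) * (mtrace (mat_adjoint X * X) / complex_of_real K)"
    unfolding f_information_def X_def[symmetric]
    using qubit_normsq_f_commutator[OF r assms(2-4) f_sym, folded X_def K_def] by simp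
  have tilde: "1 - m_mean (f_tilde f) (1 - r) (1 + r) = r\<^sup>2 * f_zero f / K"
    unfolding K_def using assms(3) by (intro one_minus_m_mean_f_tilde) simp
  show ?thesis
    unfolding SLD F tilde using assms(2) K_pos f0 by (simp add: field_simps)
qed

end
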